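(* Let $c\ge 1$, $\gamma>0$, and $\mathbf{T} = \begin{pmatrix}1\\ c\end{pmatrix}\in\mathbb{R}^{2\times 1}$. Define $H:\mathbb{R}\rightrightarrows\mathbb{R}$ by $y\in H(x)$ if and only if $x = \mathbf{T}^{\dagger}S_\gamma\mathbf{T}(x+y)$. Then for $x\ge 0$, $$H(x) = \begin{cases} \gamma\,[-\tfrac1c,\tfrac1c], & x=0,\\ \{\tfrac{\gamma}{c}+\tfrac{x}{c^2}\}, & x\in\big(0,\tfrac{\gamma(c-1)c}{c^2+1}\big],\\ \{\gamma\,\tfrac{1+c}{1+c^2}\}, & x>\tfrac{\gamma(c-1)c}{c^2+1},\end{cases}$$ and $H(x) = -H(-x)$ for $x<0$. Moreover, $H$ is the subdifferential of the even function $\Phi:\mathbb{R}\to\mathbb{R}$ given by $$\Phi(x) = \begin{cases} \tfrac{\gamma x}{c} + \tfrac{x^2}{2c^2}, & x\in\big[0,\tfrac{\gamma(c-1)c}{c^2+1}\big],\\ \gamma\,\tfrac{1+c}{1+c^2}\,x - \tfrac{\gamma^2(c-1)^2}{2(c^2+1)^2}, & x>\tfrac{\gamma(c-1)c}{c^2+1},\\ \Phi(-x), & x<0.\end{cases}$$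
   Context: $\mathbf{T}^{\dagger} = \frac{1}{1+c^2}(1,c)$ is the Moore–Penrose inverse of $\mathbf{T}$. $S_\gamma:\mathbb{R}^2\to\mathbb{R}^2$ is componentwise soft shrinkage: $[S_\gamma(\mathbf{y})]_j = y_j-\gamma$ if $y_j\ge\gamma$, $y_j+\gamma$ if $y_j\le-\gamma$, $0$ if $|y_j|<\gamma$. The subdifferential of a convex $\Phi$ is $\partial\Phi(x)=\{y: y(\tilde x - x)\le \Phi(\tilde x)-\Phi(x)\ \forall \tilde x\in\mathbb{R}\}$. *)

theory Defs
  imports Complex_Main
begin

definition Tmat :: "real \<Rightarrow> real \<Rightarrow> real \<times> real" where
  "Tmat c x = (x, c * x)"

text \<open>Moore--Penrose inverse T^dagger = (1/(1+c^2)) (1, c) : R^2 \<rightarrow> R.\<close>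
definition Tdag :: "real \<Rightarrow> real \<times> real \<Rightarrow> real" where
  "Tdag c y = (fst y + c * snd y) / (1 + c^2)"

definition soft :: "real \<Rightarrow> real \<Rightarrow> real" where
  "soft \<gamma> t = (if t \<ge> \<gamma> then t - \<gamma> else if t \<le> - \<gamma> then t + \<gamma> else 0)"

definition S :: "real \<Rightarrow> real \<times> real \<Rightarrow> real \<times> real" where
  "S \<gamma> y = (soft \<gamma> (fst y), soft \<gamma> (snd y))"

definition H :: "real \<Rightarrow> real \<Rightarrow> real \<Rightarrow> real set" where
  "H c \<gamma> x = {y. x = Tdag c (S \<gamma> (Tmat c (x + y)))}"

definition Phi_pos :: "real \<Rightarrow> real \<Rightarrow> real \<Rightarrow> real" where
  "Phi_pos c \<gamma> x = (if x \<le> \<gamma> * (c - 1) * c / (c^2 + 1)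
     then \<gamma> * x / c + x^2 / (2 * c^2)
     else \<gamma> * (1 + c) / (1 + c^2) * x - \<gamma>^2 * (c - 1)^2 / (2 * (c^2 + 1)^2))"

definition Phi :: "real \<Rightarrow> real \<Rightarrow> real \<Rightarrow> real" where
  "Phi c \<gamma> x = (if x < 0 then Phi_pos c \<gamma> (- x) else Phi_pos c \<gamma> x)"

definition subdiff :: "(real \<Rightarrow> real) \<Rightarrow> real \<Rightarrow> real set" where
  "subdiff \<Phi> x = {y. \<forall>x'. y * (x' - x) \<le> \<Phi> x' - \<Phi> x}"

end

(*
  Write g(z) = (s(z) + c s(cz)) / (1 + c^2) for the map T^dagger S_gamma T, where s is scalar soft
  shrinkage; then y \<in> H(x) iff g(x + y) = x.  The map g is odd and nondecreasing, vanishes exactly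
  on [-gamma/c, gamma/c] and is strictly increasing on [gamma/c, \<infinity>).  Hence H(0) = [-gamma/c, gamma/c],
  and for x > 0 the only solution is y = Phi'(x), which a direct computation of g(x + Phi'(x)) confirms.

  On [0, \<infinity>), Phi(u) = b u - K + (a - u)_+^2 / (2 c^2), with a the kink and b the outer slope:
  a linear function plus a convex function whose derivative is 1/c^2-Lipschitz.  So Phi lies above
  its tangent lines and below its tangent parabolas of curvature 1/c^2.  The first fact makes
  Phi'(x) a subgradient; the second squeezes every subgradient between the one-sided derivatives.
*)
theory Submission
  imports Defs
begin

lemma uminus_image_eq: "uminus ` A = {y. - y \<in> A}" for A :: "'a::group_add set"
  by (auto intro: image_eqI[where x = "- y" for y])

lemma subdiff_reflect: "subdiff (\<lambda>u. f (- u)) x = uminus ` subdiff f (- x)"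
proof -
  have "(\<forall>u. y * (u - x) \<le> f (- u) - f (- x)) \<longleftrightarrow> (\<forall>u. - y * (u - - x) \<le> f u - f (- x))"
    for y
  proof (intro iffI allI)
    fix u
    assume "\<forall>u. y * (u - x) \<le> f (- u) - f (- x)"
    from this[rule_format, of "- u"] show "- y * (u - - x) \<le> f u - f (- x)"
      by (simp add: algebra_simps)
  next
    fix u
    assume "\<forall>u. - y * (u - - x) \<le> f u - f (- x)"
    from this[rule_format, of "- u"] show "y * (u - x) \<le> f (- u) - f (- x)"
      by (simp add: algebra_simps)
  qed
  then show ?thesis unfolding subdiff_def uminus_image_eq by simp
qed

lemma subgradient_le_of_upper_bound:
  assumes y: "y \<in> subdiff f x" and "\<delta> > 0"
    and upper: "\<And>t. 0 < t \<Longrightarrow> t < \<delta> \<Longrightarrow> f (x + t) \<le> f x + d * t + M * t^2"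
  shows "y \<le> d"
proof (rule tendsto_lowerbound)
  show "((\<lambda>t. d + M * t) \<longlongrightarrow> d) (at_right 0)"
    by (auto intro!: tendsto_eq_intros)
  show "\<forall>\<^sub>F t in at_right 0. y \<le> d + M * t"
    unfolding eventually_at_right_field
  proof (intro exI conjI allI impI)
    fix t :: real assume "0 < t" "t < \<delta>"
    have "y * ((x + t) - x) \<le> f (x + t) - f x" using y unfolding subdiff_def by blast
    then have "y * t \<le> f (x + t) - f x" by simp
    also have "\<dots> \<le> (d + M * t) * t" using upper[OF \<open>0 < t\<close> \<open>t < \<delta>\<close>]
      by (simp add: algebra_simps power2_eq_square)
    finally show "y \<le> d + M * t" using \<open>0 < t\<close> by simp
  qed (use \<open>\<delta> > 0\<close> in simp)
qed simp

lemma subgradient_ge_of_upper_bound: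
  assumes y: "y \<in> subdiff f x" and "\<delta> > 0"
    and upper: "\<And>t. 0 < t \<Longrightarrow> t < \<delta> \<Longrightarrow> f (x - t) \<le> f x - d * t + M * t^2"
  shows "d \<le> y"
proof -
  have "- y \<in> subdiff (\<lambda>u. f (- u)) (- x)"
    using y unfolding subdiff_reflect by simp
  moreover have "f (- (- x + t)) \<le> f (- (- x)) + - d * t + M * t^2" if "0 < t" "t < \<delta>" for t
    using upper[OF that] by simp
  ultimately have "- y \<le> - d"
    by (rule subgradient_le_of_upper_bound[OF _ \<open>\<delta> > 0\<close>])
  then show ?thesis by simp
qed

lemma pos_part_sq_ge_tangent:
  fixes v w :: real
  shows "(max 0 w)^2 + 2 * max 0 w * (v - w) \<le> (max 0 v)^2"
proof (cases "w \<le> 0")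
  case False
  have "(max 0 w)^2 + 2 * max 0 w * (v - w) = 2 * (w * v) - w^2"
    using False by (simp add: algebra_simps power2_eq_square)
  also have "\<dots> \<le> 2 * (w * max 0 v) - w^2"
    using False by (simp add: mult_left_mono)
  also have "\<dots> \<le> (max 0 v)^2"
    using zero_le_power2[of "max 0 v - w"] unfolding power2_diff by (simp add: algebra_simps)
  finally show ?thesis .
qed simp

lemma pos_part_sq_le_tangent_add_sq:
  fixes v w :: real
  shows "(max 0 v)^2 \<le> (max 0 w)^2 + 2 * max 0 w * (v - w) + (v - w)^2"
proof -
  have "(max 0 v)^2 \<le> (max 0 w + (v - w))^2"
    by (cases "v \<le> 0") (auto intro!: power_mono)
  then show ?thesis by (simp add: power2_sum)
qed

lemma linear_plus_pos_part_sq_tangent_bounds: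
  fixes a b k m :: real
  assumes "m \<ge> 0"
  shows "b * x - k + m * (max 0 (a - x))^2 + (b - 2 * m * max 0 (a - x)) * (u - x)
           \<le> b * u - k + m * (max 0 (a - u))^2" (is ?tangent)
    and "b * u - k + m * (max 0 (a - u))^2
           \<le> b * x - k + m * (max 0 (a - x))^2 + (b - 2 * m * max 0 (a - x)) * (u - x)
              + m * (u - x)^2" (is ?parabola)
proof -
  have "m * ((max 0 (a - x))^2 + 2 * max 0 (a - x) * (x - u)) \<le> m * (max 0 (a - u))^2"
    using pos_part_sq_ge_tangent[of "a - x" "a - u"] assms by (intro mult_left_mono) simp_all
  then show ?tangent by (simp add: algebra_simps)
  have "m * (max 0 (a - u))^2
      \<le> m * ((max 0 (a - x))^2 + 2 * max 0 (a - x) * (x - u) + (x - u)^2)"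
    using pos_part_sq_le_tangent_add_sq[of "a - u" "a - x"] assms by (intro mult_left_mono) simp_all
  then show ?parabola by (simp add: algebra_simps power2_commute[of x u])
qed

lemma soft_minus: "soft \<gamma> (- t) = - soft \<gamma> t" if "\<gamma> \<ge> 0"
  using that unfolding soft_def by auto

lemma mono_soft: "mono (soft \<gamma>)" if "\<gamma> \<ge> 0"
  using that unfolding soft_def by (auto intro!: monoI)

lemma soft_eq_0: "soft \<gamma> t = 0" if "\<bar>t\<bar> \<le> \<gamma>"
  using that unfolding soft_def by auto

lemma soft_eq_diff: "soft \<gamma> t = t - \<gamma>" if "\<gamma> \<le> t"
  using that unfolding soft_def by auto

definition shrink_map :: "real \<Rightarrow> real \<Rightarrow> real \<Rightarrow> real" where
  "shrink_map c \<gamma> z = Tdag c (S \<gamma> (Tmat c z))"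

lemma shrink_map_eq: "shrink_map c \<gamma> z = (soft \<gamma> z + c * soft \<gamma> (c * z)) / (1 + c^2)"
  unfolding shrink_map_def Tdag_def S_def Tmat_def by simp

lemma H_eq_shrink_map: "H c \<gamma> x = {y. shrink_map c \<gamma> (x + y) = x}"
  unfolding H_def shrink_map_def by auto

lemma shrink_map_minus: "shrink_map c \<gamma> (- z) = - shrink_map c \<gamma> z" if "\<gamma> \<ge> 0"
  using that unfolding shrink_map_eq by (simp add: soft_minus minus_divide_left)

lemma mono_shrink_map: "mono (shrink_map c \<gamma>)" if "c \<ge> 0" "\<gamma> \<ge> 0"
proof (rule monoI)
  fix z z' :: real assume "z \<le> z'"
  with that have "soft \<gamma> z \<le> soft \<gamma> z'" "soft \<gamma> (c * z) \<le> soft \<gamma> (c * z')"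
    using mono_soft[of \<gamma>] by (auto dest: monoD intro: mult_left_mono)
  then show "shrink_map c \<gamma> z \<le> shrink_map c \<gamma> z'"
    unfolding shrink_map_eq using that by (intro divide_right_mono add_mono mult_left_mono) auto
qed

lemma strict_mono_on_shrink_map: "strict_mono_on {\<gamma> / c..} (shrink_map c \<gamma>)"
  if "c > 0" "\<gamma> \<ge> 0"
proof (rule strict_mono_onI)
  fix z z' :: real assume z: "z \<in> {\<gamma> / c..}" and "z < z'"
  with that have "\<gamma> \<le> c * z" "c * z < c * z'" by (simp_all add: field_simps)
  then have "soft \<gamma> (c * z) < soft \<gamma> (c * z')" by (simp add: soft_eq_diff)
  moreover have "soft \<gamma> z \<le> soft \<gamma> z'"
    using mono_soft[OF that(2)] \<open>z < z'\<close> by (simp add: monoD)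
  ultimately show "shrink_map c \<gamma> z < shrink_map c \<gamma> z'"
    unfolding shrink_map_eq using that
    by (intro divide_strict_right_mono add_le_less_mono) (auto simp: add_pos_nonneg)
qed

lemma shrink_map_eq_0_iff: "shrink_map c \<gamma> z = 0 \<longleftrightarrow> \<bar>z\<bar> \<le> \<gamma> / c"
  if "c \<ge> 1" "\<gamma> \<ge> 0"
proof
  assume z: "\<bar>z\<bar> \<le> \<gamma> / c"
  with that have "\<bar>c * z\<bar> \<le> \<gamma>" by (simp add: abs_mult field_simps)
  moreover have "\<bar>z\<bar> \<le> \<bar>c * z\<bar>"
    using mult_right_mono[of 1 c "\<bar>z\<bar>"] that by (simp add: abs_mult)
  ultimately have "\<bar>z\<bar> \<le> \<gamma>" "\<bar>c * z\<bar> \<le> \<gamma>" by simp_all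
  then show "shrink_map c \<gamma> z = 0" unfolding shrink_map_eq by (simp add: soft_eq_0)
next
  have "\<gamma> / c \<le> \<gamma>" "\<gamma> / c \<ge> 0"
    using mult_left_mono[of 1 c \<gamma>] that by (simp_all add: divide_le_eq)
  then have zero: "shrink_map c \<gamma> (\<gamma> / c) = 0"
    using that by (simp add: shrink_map_eq soft_eq_0)
  have pos: "shrink_map c \<gamma> w > 0" if "w > \<gamma> / c" for w
    using strict_mono_onD[OF strict_mono_on_shrink_map, of c \<gamma> "\<gamma> / c" w] that zero
      \<open>c \<ge> 1\<close> \<open>\<gamma> \<ge> 0\<close> by simp
  assume "shrink_map c \<gamma> z = 0"
  then have "\<not> z > \<gamma> / c" "\<not> - z > \<gamma> / c"
    using pos[of z] pos[of "- z"] shrink_map_minus[OF \<open>\<gamma> \<ge> 0\<close>, of c z] by auto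
  then show "\<bar>z\<bar> \<le> \<gamma> / c" by (simp add: abs_le_iff)
qed

definition kink :: "real \<Rightarrow> real \<Rightarrow> real" where
  "kink c \<gamma> = \<gamma> * (c - 1) * c / (c^2 + 1)"

definition Phi_slope :: "real \<Rightarrow> real \<Rightarrow> real \<Rightarrow> real" where
  "Phi_slope c \<gamma> x =
     (if x \<le> kink c \<gamma> then \<gamma> / c + x / c^2 else \<gamma> * (1 + c) / (1 + c^2))"

lemma kink_nonneg: "kink c \<gamma> \<ge> 0" if "c \<ge> 1" "\<gamma> \<ge> 0"
  using that unfolding kink_def by simp

lemma inner_slope_at_kink: "\<gamma> / c + kink c \<gamma> / c^2 = \<gamma> * (1 + c) / (1 + c^2)"
  if "c \<noteq> 0"
proof -
  define k where "k = \<gamma> / (1 + c^2)"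
  have "1 + c^2 \<noteq> 0" by (smt (verit) zero_le_power2)
  then have eqs: "\<gamma> / c = k * (1 + c^2) / c" "kink c \<gamma> = k * c * (c - 1)"
      "\<gamma> * (1 + c) / (1 + c^2) = k * (1 + c)"
    unfolding k_def kink_def by (simp_all add: add.commute)
  show ?thesis unfolding eqs using that by (simp add: field_simps power2_eq_square)
qed

lemma kink_add_outer_slope: "kink c \<gamma> + \<gamma> * (1 + c) / (1 + c^2) = \<gamma>"
proof -
  have "1 + c^2 \<noteq> 0" by (smt (verit) zero_le_power2)
  have "kink c \<gamma> + \<gamma> * (1 + c) / (1 + c^2)
      = (\<gamma> * (c - 1) * c + \<gamma> * (1 + c)) / (1 + c^2)"
    unfolding kink_def by (simp add: add_divide_distrib add.commute)
  also have "\<gamma> * (c - 1) * c + \<gamma> * (1 + c) = \<gamma> * (1 + c^2)"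
    by (simp add: algebra_simps power2_eq_square)
  also have "\<gamma> * (1 + c^2) / (1 + c^2) = \<gamma>"
    using \<open>1 + c^2 \<noteq> 0\<close> by simp
  finally show ?thesis .
qed

lemma kink_sq: "kink c \<gamma>^2 / (2 * c^2) = \<gamma>^2 * (c - 1)^2 / (2 * (c^2 + 1)^2)" if "c \<noteq> 0"
  using that unfolding kink_def by (simp add: power_divide power_mult_distrib)

lemma Phi_slope_eq_pos_part:
  "Phi_slope c \<gamma> x = \<gamma> * (1 + c) / (1 + c^2) - max 0 (kink c \<gamma> - x) / c^2" if "c \<noteq> 0"
  using inner_slope_at_kink[OF that, of \<gamma>, symmetric] unfolding Phi_slope_def
  by (auto simp: diff_divide_distrib)

lemma Phi_pos_eq_pos_part:
  "Phi_pos c \<gamma> u = \<gamma> * (1 + c) / (1 + c^2) * u - \<gamma>^2 * (c - 1)^2 / (2 * (c^2 + 1)^2)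
     + (max 0 (kink c \<gamma> - u))^2 / (2 * c^2)" if "c \<noteq> 0"
proof (cases "u \<le> kink c \<gamma>")
  case True
  have "\<gamma> * u / c + u^2 / (2 * c^2)
      = (\<gamma> / c + a / c^2) * u - a^2 / (2 * c^2) + (a - u)^2 / (2 * c^2)" for a
    using that by (simp add: field_simps power2_eq_square)
  from this[of "kink c \<gamma>"] show ?thesis
    using True unfolding Phi_pos_def kink_def[symmetric] inner_slope_at_kink[OF that] kink_sq[OF that]
    by simp
qed (simp add: Phi_pos_def kink_def)

lemma Phi_pos_ge_tangent:
  "Phi_pos c \<gamma> x + Phi_slope c \<gamma> x * (u - x) \<le> Phi_pos c \<gamma> u" if "c \<noteq> 0"
  using linear_plus_pos_part_sq_tangent_bounds(1)[of "1 / (2 * c^2)" "\<gamma> * (1 + c) / (1 + c^2)" x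
      "\<gamma>^2 * (c - 1)^2 / (2 * (c^2 + 1)^2)" "kink c \<gamma>" u]
  unfolding Phi_pos_eq_pos_part[OF that] Phi_slope_eq_pos_part[OF that] by simp

lemma Phi_pos_le_tangent_add_sq:
  "Phi_pos c \<gamma> u \<le> Phi_pos c \<gamma> x + Phi_slope c \<gamma> x * (u - x) + (u - x)^2 / (2 * c^2)"
  if "c \<noteq> 0"
  using linear_plus_pos_part_sq_tangent_bounds(2)[of "1 / (2 * c^2)" "\<gamma> * (1 + c) / (1 + c^2)" u
      "\<gamma>^2 * (c - 1)^2 / (2 * (c^2 + 1)^2)" "kink c \<gamma>" x]
  unfolding Phi_pos_eq_pos_part[OF that] Phi_slope_eq_pos_part[OF that] by simp

lemma Phi_eq_Phi_pos_abs: "Phi c \<gamma> u = Phi_pos c \<gamma> \<bar>u\<bar>"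
  unfolding Phi_def by simp

lemma Phi_minus: "Phi c \<gamma> (- u) = Phi c \<gamma> u"
  unfolding Phi_eq_Phi_pos_abs by simp

lemma Phi_slope_0: "Phi_slope c \<gamma> 0 = \<gamma> / c" if "c \<ge> 1" "\<gamma> \<ge> 0"
  using kink_nonneg[OF that] unfolding Phi_slope_def by simp

lemma Phi_slope_ge: "\<gamma> / c \<le> Phi_slope c \<gamma> x" if "c \<ge> 1" "\<gamma> \<ge> 0" "x \<ge> 0"
proof -
  have "0 \<le> kink c \<gamma> / c^2" using kink_nonneg[OF that(1,2)] by simp
  then show ?thesis using inner_slope_at_kink[of c \<gamma>] that unfolding Phi_slope_def by auto
qed

lemma Phi_ge_tangent_abs:
  "Phi c \<gamma> x + Phi_slope c \<gamma> x * (\<bar>u\<bar> - x) \<le> Phi c \<gamma> u" if "c \<ge> 1" "x \<ge> 0"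
  using Phi_pos_ge_tangent[of c \<gamma> x "\<bar>u\<bar>"] that unfolding Phi_eq_Phi_pos_abs by simp

lemma Phi_le_tangent_add_sq:
  "Phi c \<gamma> (x + t) \<le> Phi c \<gamma> x + Phi_slope c \<gamma> x * t + t^2 / (2 * c^2)"
  if "c \<ge> 1" "x \<ge> 0" "x + t \<ge> 0"
  using Phi_pos_le_tangent_add_sq[of c \<gamma> "x + t" x] that unfolding Phi_eq_Phi_pos_abs by simp

lemma subdiff_Phi_of_pos:
  assumes "c \<ge> 1" "\<gamma> \<ge> 0" "x > 0"
  shows "subdiff (Phi c \<gamma>) x = {Phi_slope c \<gamma> x}"
proof (intro subset_antisym subsetI)
  fix y assume y: "y \<in> subdiff (Phi c \<gamma>) x"
  have upper:
    "Phi c \<gamma> (x + t) \<le> Phi c \<gamma> x + Phi_slope c \<gamma> x * t + 1 / (2 * c^2) * t^2" if "t > - x" for t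
    using Phi_le_tangent_add_sq[of c x t \<gamma>] assms that by simp
  have "y \<le> Phi_slope c \<gamma> x"
    by (rule subgradient_le_of_upper_bound[OF y \<open>x > 0\<close> upper]) simp
  moreover have "Phi_slope c \<gamma> x \<le> y"
  proof (rule subgradient_ge_of_upper_bound[OF y \<open>x > 0\<close>])
    fix t assume "0 < t" "t < x"
    then show "Phi c \<gamma> (x - t) \<le> Phi c \<gamma> x - Phi_slope c \<gamma> x * t + 1 / (2 * c^2) * t^2"
      using upper[of "- t"] by simp
  qed
  ultimately show "y \<in> {Phi_slope c \<gamma> x}" by simp
next
  fix y assume "y \<in> {Phi_slope c \<gamma> x}"
  then have y: "y = Phi_slope c \<gamma> x" by simp
  have "y * (u - x) \<le> Phi c \<gamma> u - Phi c \<gamma> x" for u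
  proof -
    have "y * (u - x) \<le> y * (\<bar>u\<bar> - x)"
      unfolding y using order_trans[OF _ Phi_slope_ge[of c \<gamma> x]] assms
      by (intro mult_left_mono) simp_all
    also have "\<dots> \<le> Phi c \<gamma> u - Phi c \<gamma> x"
      unfolding y using Phi_ge_tangent_abs[of c x \<gamma> u] assms by simp
    finally show ?thesis .
  qed
  then show "y \<in> subdiff (Phi c \<gamma>) x" unfolding subdiff_def by simp
qed

lemma subdiff_Phi_0:
  assumes "c \<ge> 1" "\<gamma> \<ge> 0"
  shows "subdiff (Phi c \<gamma>) 0 = {- \<gamma> / c .. \<gamma> / c}"
proof (intro subset_antisym subsetI)
  have upper: "Phi c \<gamma> t \<le> Phi c \<gamma> 0 + \<gamma> / c * t + 1 / (2 * c^2) * t^2"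
    if "t \<ge> 0" for t
    using Phi_le_tangent_add_sq[of c 0 t \<gamma>] Phi_slope_0[OF assms] assms that by simp
  fix y assume y: "y \<in> subdiff (Phi c \<gamma>) 0"
  have "y \<le> \<gamma> / c"
  proof (rule subgradient_le_of_upper_bound[OF y zero_less_one])
    fix t :: real assume "0 < t"
    then show "Phi c \<gamma> (0 + t) \<le> Phi c \<gamma> 0 + \<gamma> / c * t + 1 / (2 * c^2) * t^2"
      using upper[of t] by simp
  qed
  moreover have "- \<gamma> / c \<le> y"
  proof (rule subgradient_ge_of_upper_bound[OF y zero_less_one])
    fix t :: real assume "0 < t"
    then show "Phi c \<gamma> (0 - t) \<le> Phi c \<gamma> 0 - - \<gamma> / c * t + 1 / (2 * c^2) * t^2"
      using upper[of t] Phi_minus[of c \<gamma> t] by simp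
  qed
  ultimately show "y \<in> {- \<gamma> / c .. \<gamma> / c}" by simp
next
  fix y assume "y \<in> {- \<gamma> / c .. \<gamma> / c}"
  then have y: "\<bar>y\<bar> \<le> \<gamma> / c" by auto
  have "y * (u - 0) \<le> Phi c \<gamma> u - Phi c \<gamma> 0" for u
  proof -
    have "y * u \<le> \<bar>y\<bar> * \<bar>u\<bar>" unfolding abs_mult[symmetric] by (rule abs_ge_self)
    also have "\<dots> \<le> \<gamma> / c * \<bar>u\<bar>" by (rule mult_right_mono[OF y abs_ge_zero])
    also have "\<dots> \<le> Phi c \<gamma> u - Phi c \<gamma> 0"
      using Phi_ge_tangent_abs[of c 0 \<gamma> u] Phi_slope_0[OF assms] assms by simp
    finally show ?thesis by simp
  qed
  then show "y \<in> subdiff (Phi c \<gamma>) 0" unfolding subdiff_def by simp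
qed

lemma shrink_map_add_Phi_slope: "shrink_map c \<gamma> (x + Phi_slope c \<gamma> x) = x"
  if "c \<ge> 1" "\<gamma> \<ge> 0" "x \<ge> 0"
proof -
  have "c > 0" "1 + c^2 > 0" using that by (simp_all add: add_pos_nonneg)
  show ?thesis
  proof (cases "x \<le> kink c \<gamma>")
    case True
    define z where "z = x + \<gamma> / c + x / c^2"
    have "x + x / c^2 \<le> kink c \<gamma> + kink c \<gamma> / c^2"
      using True by (intro add_mono divide_right_mono) simp_all
    then have "z \<le> \<gamma>"
      using inner_slope_at_kink[of c \<gamma>] kink_add_outer_slope[of c \<gamma>] that
      unfolding z_def by simp
    moreover have "0 \<le> z" using that unfolding z_def by simp
    moreover have "c * z = \<gamma> + (c * x + x / c)"
      using \<open>c > 0\<close> unfolding z_def by (simp add: field_simps power2_eq_square)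
    ultimately have "shrink_map c \<gamma> z = c * (c * x + x / c) / (1 + c^2)"
      using that unfolding shrink_map_eq by (simp add: soft_eq_0 soft_eq_diff)
    also have "\<dots> = x * (1 + c^2) / (1 + c^2)"
      using \<open>c > 0\<close> by (simp add: algebra_simps power2_eq_square)
    also have "\<dots> = x" using \<open>1 + c^2 > 0\<close> by simp
    finally show ?thesis using True unfolding z_def Phi_slope_def by (simp add: add.assoc)
  next
    case False
    define z where "z = x + \<gamma> * (1 + c) / (1 + c^2)"
    have "\<gamma> < z" using False kink_add_outer_slope[of c \<gamma>] unfolding z_def by simp
    moreover have "z \<le> c * z" using \<open>\<gamma> < z\<close> that mult_right_mono[of 1 c z] by simp
    ultimately have "shrink_map c \<gamma> z = ((1 + c^2) * z - \<gamma> * (1 + c)) / (1 + c^2)"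
      unfolding shrink_map_eq by (simp add: soft_eq_diff algebra_simps power2_eq_square)
    moreover have "(1 + c^2) * z
        = (1 + c^2) * x + (1 + c^2) * (\<gamma> * (1 + c) / (1 + c^2))"
      unfolding z_def by (rule distrib_left)
    moreover have "(1 + c^2) * (\<gamma> * (1 + c) / (1 + c^2)) = \<gamma> * (1 + c)"
      using \<open>1 + c^2 > 0\<close> by simp
    ultimately have "shrink_map c \<gamma> z = x" using \<open>1 + c^2 > 0\<close> by simp
    then show ?thesis using False unfolding z_def Phi_slope_def by simp
  qed
qed

lemma H_of_pos:
  assumes "c \<ge> 1" "\<gamma> \<ge> 0" "x > 0"
  shows "H c \<gamma> x = {Phi_slope c \<gamma> x}"
proof -
  have slope: "shrink_map c \<gamma> (x + Phi_slope c \<gamma> x) = x"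
    using shrink_map_add_Phi_slope assms by simp
  have slope_dom: "x + Phi_slope c \<gamma> x \<in> {\<gamma> / c..}"
    using Phi_slope_ge[of c \<gamma> x] assms by simp
  have inj: "strict_mono_on {\<gamma> / c..} (shrink_map c \<gamma>)"
    using strict_mono_on_shrink_map assms by simp
  have "y = Phi_slope c \<gamma> x" if y: "shrink_map c \<gamma> (x + y) = x" for y
  proof -
    have "x + y \<in> {\<gamma> / c..}"
    proof (rule ccontr)
      assume "x + y \<notin> {\<gamma> / c..}"
      then have "shrink_map c \<gamma> (x + y) \<le> shrink_map c \<gamma> (\<gamma> / c)"
        using assms by (intro monoD[OF mono_shrink_map]) simp_all
      also have "\<dots> = 0" using shrink_map_eq_0_iff[of c \<gamma>] assms by simp
      finally show False using y \<open>x > 0\<close> by simp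
    qed
    from strict_mono_on_eqD[OF inj _ slope_dom this] y slope
    have "x + y = x + Phi_slope c \<gamma> x" by simp
    then show ?thesis by simp
  qed
  then show ?thesis unfolding H_eq_shrink_map using slope by blast
qed

lemma H_0: "H c \<gamma> 0 = {- \<gamma> / c .. \<gamma> / c}" if "c \<ge> 1" "\<gamma> \<ge> 0"
  unfolding H_eq_shrink_map shrink_map_eq_0_iff[OF that] by (auto simp: abs_le_iff)

lemma H_minus: "H c \<gamma> (- x) = uminus ` H c \<gamma> x" if "\<gamma> \<ge> 0"
proof -
  have "shrink_map c \<gamma> (- x + y) = - x \<longleftrightarrow> shrink_map c \<gamma> (x + - y) = x" for y
    using shrink_map_minus[OF that, of c "x + - y"] by auto
  then show ?thesis unfolding H_eq_shrink_map uminus_image_eq by simp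
qed

lemma H_eq_subdiff_Phi: "H c \<gamma> x = subdiff (Phi c \<gamma>) x" if "c \<ge> 1" "\<gamma> \<ge> 0"
proof (cases x "0 :: real" rule: linorder_cases)
  case less
  have "H c \<gamma> x = uminus ` H c \<gamma> (- x)"
    using H_minus[OF that(2), of c "- x"] by simp
  also have "\<dots> = uminus ` subdiff (Phi c \<gamma>) (- x)"
    using H_of_pos subdiff_Phi_of_pos that less by simp
  also have "\<dots> = subdiff (Phi c \<gamma>) x"
    using subdiff_reflect[of "Phi c \<gamma>" x] by (simp add: Phi_minus)
  finally show ?thesis .
qed (use H_0 subdiff_Phi_0 H_of_pos subdiff_Phi_of_pos that in simp_all)

theorem lemma2p1:
  fixes c \<gamma> :: real
  assumes "c \<ge> 1" and "\<gamma> > 0"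
  shows "(\<forall>x\<ge>0. H c \<gamma> x =
            (if x = 0 then {- \<gamma> / c .. \<gamma> / c}
             else if x \<le> \<gamma> * (c - 1) * c / (c^2 + 1) then {\<gamma> / c + x / c^2}
             else {\<gamma> * (1 + c) / (1 + c^2)}))
       \<and> (\<forall>x<0. H c \<gamma> x = uminus ` H c \<gamma> (- x))
       \<and> (\<forall>x. Phi c \<gamma> (- x) = Phi c \<gamma> x)
       \<and> (\<forall>x. H c \<gamma> x = subdiff (Phi c \<gamma>) x)"
proof -
  have c: "c \<ge> 1" and \<gamma>: "\<gamma> \<ge> 0" using assms by simp_all
  have "H c \<gamma> x =
          (if x = 0 then {- \<gamma> / c .. \<gamma> / c}
           else if x \<le> \<gamma> * (c - 1) * c / (c^2 + 1) then {\<gamma> / c + x / c^2}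
           else {\<gamma> * (1 + c) / (1 + c^2)})" if "x \<ge> 0" for x
  proof -
    from that consider "x = 0" | "x > 0" by linarith
    then show ?thesis
      by cases (simp_all add: H_0[OF c \<gamma>] H_of_pos[OF c \<gamma>] Phi_slope_def kink_def)
  qed
  moreover have "H c \<gamma> x = uminus ` H c \<gamma> (- x)" for x
    using H_minus[OF \<gamma>, of c "- x"] by simp
  ultimately show ?thesis using Phi_minus H_eq_subdiff_Phi[OF c \<gamma>] by blast
qed

end
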